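(* There exist two dynamical systems $(X_1,T_1)$ and $(X_2,T_2)$, each having dense periodic measures, such that the product system $(X_1\times X_2,T_1\times T_2)$ does not have dense periodic measures.
   Context: A dynamical system is a pair $(X,T)$ where $X$ is a compact metrizable space and $T:X\to X$ a homeomorphism. $(X,T)$ has dense periodic measures if the finitely supported $T$-invariant Borel probability measures are weak-* dense in the space $\mathcal{M}_T(X)$ of all $T$-invariant Borel probability measures on $X$. *)

theory Defs
  imports "HOL-Analysis.Analysis" "HOL-Probability.Probability"
begin

text \<open>Metrizability is automatic since the ambient type is
  a metric space; we use the Hilbert-cube type nat => real, into which every compact
  metrizable space embeds.\<close>
definition dynamical_system :: "'a::metric_space set \<Rightarrow> ('a \<Rightarrow> 'a) \<Rightarrow> bool" where
  "dynamical_system X T \<longleftrightarrow> compact X \<and> (\<exists>g. homeomorphism X X T g)"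

definition invariant_prob :: "'a::topological_space set \<Rightarrow> ('a \<Rightarrow> 'a) \<Rightarrow> 'a measure \<Rightarrow> bool" where
  "invariant_prob X T \<mu> \<longleftrightarrow>
     sets \<mu> = sets (restrict_space borel X) \<and> prob_space \<mu> \<and>
     T \<in> measurable \<mu> \<mu> \<and> distr \<mu> \<mu> T = \<mu>"

definition periodic_measure :: "'a::topological_space set \<Rightarrow> ('a \<Rightarrow> 'a) \<Rightarrow> 'a measure \<Rightarrow> bool" where
  "periodic_measure X T \<nu> \<longleftrightarrow>
     invariant_prob X T \<nu> \<and> (\<exists>S. finite S \<and> S \<subseteq> X \<and> emeasure \<nu> S = 1)"

text \<open>Weak-* density: every basic weak-* neighbourhood of every invariant measure
  (given by finitely many continuous functions and a tolerance) contains a periodic measure.\<close>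
definition dense_periodic_measures :: "'a::topological_space set \<Rightarrow> ('a \<Rightarrow> 'a) \<Rightarrow> bool" where
  "dense_periodic_measures X T \<longleftrightarrow>
     (\<forall>\<mu>. invariant_prob X T \<mu> \<longrightarrow>
        (\<forall>F \<epsilon>. finite F \<and> (\<forall>f\<in>F. continuous_on X f) \<and> \<epsilon> > (0::real) \<longrightarrow>
           (\<exists>\<nu>. periodic_measure X T \<nu> \<and>
                 (\<forall>f\<in>F. \<bar>(\<integral>x. f x \<partial>\<nu>) - (\<integral>x. f x \<partial>\<mu>)\<bar> < \<epsilon>))))"

definition prod_map :: "('a \<Rightarrow> 'a) \<Rightarrow> ('b \<Rightarrow> 'b) \<Rightarrow> 'a \<times> 'b \<Rightarrow> 'a \<times> 'b" where
  "prod_map T1 T2 = (\<lambda>(x, y). (T1 x, T2 y))"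

end

theory Submission
  imports Defs "HOL-Library.Real_Mod"
begin

text \<open>
  Let \<open>\<alpha>\<close> be the sum of \<open>2^-(k+1)!\<close> over all \<open>k\<close>, with partial sums \<open>\<beta>_j\<close>. Over a compact
  base set \<open>B\<close> of reals consider the circle bundle \<open>B \<times> S\<^sup>1\<close> with the skew rotation
  \<open>(b, z) \<mapsto> (b, z e^(2\<pi>ib))\<close>, and take as base the closed set of all \<open>\<beta>_(\<sigma> m)\<close> together with \<open>\<alpha>\<close>.

  Such a system has dense periodic measures: moving all circles beyond the \<open>N\<close>-th onto the
  \<open>N\<close>-th one and rounding \<open>z\<close> to a fine grid maps it to finitely many points of the common
  period \<open>2^(\<sigma> N)!\<close>, and because \<open>\<alpha> - \<beta>_j \<le> 2 \<cdot> 2^-(j+1)!\<close> the rounded orbits shadow the true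
  ones during a whole period. Averaging the rounded orbits over one period against an invariant
  measure \<open>\<mu>\<close> therefore yields a periodic measure that is weak-* close to \<open>\<mu>\<close>.

  Take \<open>\<sigma>\<close> to enumerate the odd numbers for the first factor and the even numbers for the second.
  The product then carries the invariant Lebesgue measure on the diagonal circle over \<open>(\<alpha>, \<alpha>)\<close>,
  on which the continuous function \<open>Re (z\<^sub>1 cnj z\<^sub>2)\<close> equals 1. A periodic measure, however, lives
  on finitely many periodic points. Their base points are rational, since \<open>\<alpha>\<close> is irrational,
  hence of the form \<open>(\<beta>_odd, \<beta>_even)\<close>. These differ by a non-integer, so \<open>Re (z\<^sub>1 cnj z\<^sub>2)\<close>
  averages to 0 along every periodic orbit.
\<close>

section \<open>Dynamical systems and invariant measures\<close>

lemma compact_dynamical_system: "dynamical_system X T \<Longrightarrow> compact X"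
  by (simp add: dynamical_system_def)

lemma dynamical_system_continuous: "dynamical_system X T \<Longrightarrow> continuous_on X T"
  by (auto simp: dynamical_system_def homeomorphism_def)

lemma dynamical_system_image: "dynamical_system X T \<Longrightarrow> T ` X = X"
  by (auto simp: dynamical_system_def homeomorphism_def)

lemma dynamical_system_inj_on: "dynamical_system X T \<Longrightarrow> inj_on T X"
  unfolding dynamical_system_def by (metis homeomorphism_apply1 inj_on_inverseI)

lemma dynamical_system_funpow_in: "dynamical_system X T \<Longrightarrow> x \<in> X \<Longrightarrow> (T ^^ k) x \<in> X"
  by (induction k) (auto dest: dynamical_system_image)

lemma measurable_dynamical_system:
  assumes "dynamical_system X T"
  shows "T \<in> measurable (restrict_space borel X) (restrict_space borel X)"
  using assms
  by (intro measurable_restrict_space2 borel_measurable_continuous_on_restrict)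
     (auto simp: space_restrict_space dynamical_system_continuous dest: dynamical_system_image)

lemma prod_map_eq_map_prod: "prod_map = map_prod"
  by (simp add: fun_eq_iff prod_map_def)

lemma continuous_on_map_prod:
  assumes "continuous_on A f" "continuous_on B g"
  shows "continuous_on (A \<times> B) (map_prod f g)"
  unfolding map_prod_def split_beta
  by (intro continuous_on_Pair continuous_on_compose2[OF assms(1)] continuous_on_compose2[OF assms(2)]
      continuous_on_fst continuous_on_snd continuous_on_id) auto

lemma dynamical_system_prod_map:
  assumes "dynamical_system X1 T1" "dynamical_system X2 T2"
  shows "dynamical_system (X1 \<times> X2) (prod_map T1 T2)"
proof -
  obtain g1 g2 where "homeomorphism X1 X1 T1 g1" "homeomorphism X2 X2 T2 g2"
    using assms by (auto simp: dynamical_system_def)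
  then have "homeomorphism (X1 \<times> X2) (X1 \<times> X2) (map_prod T1 T2) (map_prod g1 g2)"
    unfolding homeomorphism_def
    by (intro conjI ballI continuous_on_map_prod map_prod_surj_on) auto
  then show ?thesis
    using assms by (auto simp: dynamical_system_def compact_Times prod_map_eq_map_prod)
qed

lemma integral_funpow_invariant:
  fixes f :: "'a \<Rightarrow> real"
  assumes T: "T \<in> measurable M M" and inv: "distr M M T = M" and f: "f \<in> borel_measurable M"
  shows "(\<integral>x. f ((T ^^ k) x) \<partial>M) = (\<integral>x. f x \<partial>M)"
proof (induction k)
  case (Suc k)
  have "(\<integral>x. f ((T ^^ Suc k) x) \<partial>M) = (\<integral>x. f ((T ^^ k) x) \<partial>distr M M T)"
    using measurable_compose[OF measurable_compose_n[OF T] f]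
    by (simp add: integral_distr[OF T] funpow_Suc_right del: funpow.simps)
  then show ?case
    using inv Suc by simp
qed simp

lemma integrable_continuous_on_compose:
  fixes f :: "'a::metric_space \<Rightarrow> real"
  assumes "finite_measure M" and g: "g \<in> measurable M (restrict_space borel X)"
    and "compact X" and f: "continuous_on X f"
  shows "integrable M (\<lambda>x. f (g x))"
proof -
  interpret finite_measure M by fact
  obtain B where B: "\<forall>y\<in>X. norm (f y) \<le> B"
    using compact_imp_bounded[OF compact_continuous_image[OF f \<open>compact X\<close>]]
    by (auto simp: bounded_iff)
  have "(\<lambda>x. f (g x)) \<in> borel_measurable M"
    using measurable_compose[OF g borel_measurable_continuous_on_restrict[OF f]] .
  moreover have "g x \<in> X" if "x \<in> space M" for x
    using measurable_space[OF g that] by (simp add: space_restrict_space)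
  ultimately show ?thesis
    using B by (intro integrable_const_bound[where B=B]) auto
qed

lemma (in prob_space) abs_integral_diff_le:
  fixes f g :: "'a \<Rightarrow> real"
  assumes "integrable M f" "integrable M g" "\<And>x. x \<in> space M \<Longrightarrow> \<bar>f x - g x\<bar> \<le> c"
  shows "\<bar>(\<integral>x. f x \<partial>M) - (\<integral>x. g x \<partial>M)\<bar> \<le> c"
proof -
  have "\<bar>(\<integral>x. f x \<partial>M) - (\<integral>x. g x \<partial>M)\<bar> \<le> (\<integral>x. \<bar>f x - g x\<bar> \<partial>M)"
    using assms(1,2) by (simp flip: Bochner_Integration.integral_diff)
  also have "\<dots> \<le> c"
    using assms by (intro integral_le_const AE_I2) auto
  finally show ?thesis .
qed

lemma finite_in_sets_restrict_borel:
  fixes S :: "'a::t1_space set"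
  assumes "finite S" "S \<subseteq> X"
  shows "S \<in> sets (restrict_space borel X)"
proof -
  have "S = X \<inter> S" "S \<in> sets borel"
    using assms by (auto intro: borel_closed finite_imp_closed)
  then show ?thesis
    unfolding sets_restrict_space by blast
qed

section \<open>Averages along approximate periodic orbits\<close>

lemma distr_uniform_count_measure_bij:
  assumes "finite A" and f: "bij_betw f A A"
  shows "distr (uniform_count_measure A) (uniform_count_measure A) f = uniform_count_measure A"
proof (rule measure_eqI)
  have f_meas: "f \<in> measurable (uniform_count_measure A) (uniform_count_measure A)"
    using f by (auto simp: measurable_def sets_uniform_count_measure space_uniform_count_measure
        bij_betw_def)
  fix B assume "B \<in> sets (distr (uniform_count_measure A) (uniform_count_measure A) f)"
  then have B: "B \<subseteq> A"
    by (simp add: sets_uniform_count_measure)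
  have "f ` (f -` B \<inter> A) = B" "inj_on f (f -` B \<inter> A)"
    using f B unfolding bij_betw_def by (force, blast intro: inj_on_subset)
  then have "card (f -` B \<inter> A) = card B"
    by (metis card_image)
  then show "emeasure (distr (uniform_count_measure A) (uniform_count_measure A) f) B
      = emeasure (uniform_count_measure A) B"
    using B \<open>finite A\<close>
    by (simp add: emeasure_distr[OF f_meas] sets_uniform_count_measure space_uniform_count_measure
        emeasure_uniform_count_measure)
qed simp

lemma bij_betw_Suc_mod:
  assumes "0 < L"
  shows "bij_betw (\<lambda>k. Suc k mod L) {..<L} {..<L}"
proof -
  have "inj_on (\<lambda>k. Suc k mod L) {..<L}"
    by (auto simp: inj_on_def mod_Suc split: if_splits)
  moreover have "(\<lambda>k. Suc k mod L) ` {..<L} \<subseteq> {..<L}"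
    using assms by auto
  ultimately show ?thesis
    by (simp add: bij_betw_def endo_inj_surj)
qed

lemma distr_pair_uniform_count_measure_shift:
  assumes "0 < L" "sigma_finite_measure M"
  defines "U \<equiv> uniform_count_measure {..<L}"
  shows "map_prod (\<lambda>k. Suc k mod L) id \<in> measurable (U \<Otimes>\<^sub>M M) (U \<Otimes>\<^sub>M M)"
    and "distr (U \<Otimes>\<^sub>M M) (U \<Otimes>\<^sub>M M) (map_prod (\<lambda>k. Suc k mod L) id) = U \<Otimes>\<^sub>M M"
proof -
  have s: "(\<lambda>k. Suc k mod L) \<in> measurable U U"
    using assms(1) by (simp add: U_def measurable_def sets_uniform_count_measure space_uniform_count_measure)
  then show "map_prod (\<lambda>k. Suc k mod L) id \<in> measurable (U \<Otimes>\<^sub>M M) (U \<Otimes>\<^sub>M M)"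
    unfolding map_prod_def split_beta id_def by measurable
  have "distr U U (\<lambda>k. Suc k mod L) \<Otimes>\<^sub>M distr M M id
      = distr (U \<Otimes>\<^sub>M M) (U \<Otimes>\<^sub>M M) (\<lambda>(k, x). (Suc k mod L, id x))"
    using assms(2) s by (intro pair_measure_distr) (auto simp: id_def)
  moreover have "distr U U (\<lambda>k. Suc k mod L) = U"
    unfolding U_def by (rule distr_uniform_count_measure_bij[OF _ bij_betw_Suc_mod[OF assms(1)]]) simp
  ultimately show "distr (U \<Otimes>\<^sub>M M) (U \<Otimes>\<^sub>M M) (map_prod (\<lambda>k. Suc k mod L) id) = U \<Otimes>\<^sub>M M"
    by (simp add: map_prod_def id_def)
qed

lemma funpow_Suc_mod:
  assumes "(f ^^ L) y = y" "k < L"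
  shows "f ((f ^^ k) y) = (f ^^ (Suc k mod L)) y"
proof (cases "Suc k = L")
  case True
  then show ?thesis
    using assms(1) by (simp add: True[symmetric])
next
  case False
  then have "Suc k < L"
    using assms(2) by simp
  then show ?thesis
    by simp
qed

text \<open>The measure \<open>(1/L) \<Sum>k<L. (T^k \<circ> \<pi>)\<^sub>* \<mu>\<close>, written as an image of \<open>\<mu>\<close> times the uniform
  distribution on \<open>{..<L}\<close>.\<close>
definition orbit_average ::
    "'a::topological_space set \<Rightarrow> ('a \<Rightarrow> 'a) \<Rightarrow> nat \<Rightarrow> ('a \<Rightarrow> 'a) \<Rightarrow> 'a measure \<Rightarrow> 'a measure" where
  "orbit_average X T L \<pi> \<mu> =
     distr (uniform_count_measure {..<L} \<Otimes>\<^sub>M \<mu>) (restrict_space borel X) (\<lambda>(k, x). (T ^^ k) (\<pi> x))"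

context
  fixes X :: "'a::metric_space set" and T \<pi> :: "'a \<Rightarrow> 'a" and L :: nat and \<mu> :: "'a measure"
  assumes dyn: "dynamical_system X T"
    and sets_\<mu>: "sets \<mu> = sets (restrict_space borel X)" and prob_\<mu>: "prob_space \<mu>"
    and \<pi>: "\<pi> \<in> measurable (restrict_space borel X) (restrict_space borel X)"
    and L: "0 < L"
begin

lemma space_orbit_product: "space (uniform_count_measure {..<L} \<Otimes>\<^sub>M \<mu>) = {..<L} \<times> X"
  using sets_eq_imp_space_eq[OF sets_\<mu>]
  by (simp add: space_pair_measure space_uniform_count_measure space_restrict_space)

lemma prob_space_orbit_product: "prob_space (uniform_count_measure {..<L} \<Otimes>\<^sub>M \<mu>)"
  using L prob_\<mu> by (intro prob_space_pair prob_space_uniform_count_measure) auto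

lemma orbit_map_measurable:
  "(\<lambda>(k, x). (T ^^ k) (\<pi> x))
     \<in> measurable (uniform_count_measure {..<L} \<Otimes>\<^sub>M \<mu>) (restrict_space borel X)"
proof -
  have "(\<lambda>x. (T ^^ k) (\<pi> x)) \<in> measurable \<mu> (restrict_space borel X)" for k
    using measurable_compose[OF \<pi> measurable_compose_n[OF measurable_dynamical_system[OF dyn]]]
    by (simp add: measurable_cong_sets[OF sets_\<mu> refl])
  then have "(\<lambda>(k, x). (T ^^ k) (\<pi> x)) \<in> measurable (count_space {..<L} \<Otimes>\<^sub>M \<mu>) (restrict_space borel X)"
    by (intro measurable_pair_measure_countable1) auto
  then show ?thesis
    by (simp add: measurable_cong_sets[OF sets_pair_measure_cong[OF
          sets_uniform_count_measure_count_space refl] refl])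
qed

lemma sets_orbit_average: "sets (orbit_average X T L \<pi> \<mu>) = sets (restrict_space borel X)"
  by (simp add: orbit_average_def)

lemma prob_space_orbit_average: "prob_space (orbit_average X T L \<pi> \<mu>)"
  unfolding orbit_average_def
  by (rule prob_space.prob_space_distr[OF prob_space_orbit_product orbit_map_measurable])

lemma invariant_prob_orbit_average:
  assumes per: "\<And>x. x \<in> X \<Longrightarrow> (T ^^ L) (\<pi> x) = \<pi> x"
  shows "invariant_prob X T (orbit_average X T L \<pi> \<mu>)"
proof -
  define U where "U = uniform_count_measure {..<L}"
  define M where "M = restrict_space borel X"
  define s where "s = map_prod (\<lambda>k. Suc k mod L) (id :: 'a \<Rightarrow> 'a)"
  define \<Phi> where "\<Phi> = (\<lambda>(k, x). (T ^^ k) (\<pi> x))"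
  define \<nu> where "\<nu> = orbit_average X T L \<pi> \<mu>"
  have TM: "T \<in> measurable M M"
    unfolding M_def by (rule measurable_dynamical_system[OF dyn])
  have \<Phi>: "\<Phi> \<in> measurable (U \<Otimes>\<^sub>M \<mu>) M"
    using orbit_map_measurable by (simp add: U_def M_def \<Phi>_def)
  note shift = distr_pair_uniform_count_measure_shift[OF L prob_space_imp_sigma_finite[OF prob_\<mu>],
      folded U_def s_def]
  have orbit_shift: "T (\<Phi> p) = \<Phi> (s p)" if "p \<in> space (U \<Otimes>\<^sub>M \<mu>)" for p
  proof -
    obtain k x where p: "p = (k, x)" "k < L" "x \<in> X"
      using \<open>p \<in> _\<close> space_orbit_product by (auto simp: U_def)
    then show ?thesis
      using funpow_Suc_mod[OF per[OF p(3)] p(2)] by (simp add: \<Phi>_def s_def)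
  qed
  have \<nu>_eq: "\<nu> = distr (U \<Otimes>\<^sub>M \<mu>) M \<Phi>"
    by (simp add: \<nu>_def orbit_average_def U_def M_def \<Phi>_def)
  have "distr \<nu> \<nu> T = distr \<nu> M T"
    by (rule distr_cong) (auto simp: \<nu>_eq)
  also have "\<dots> = distr (U \<Otimes>\<^sub>M \<mu>) M (T \<circ> \<Phi>)"
    unfolding \<nu>_eq by (rule distr_distr[OF TM \<Phi>])
  also have "\<dots> = distr (U \<Otimes>\<^sub>M \<mu>) M (\<Phi> \<circ> s)"
    by (rule distr_cong) (auto simp: orbit_shift)
  also have "\<dots> = distr (distr (U \<Otimes>\<^sub>M \<mu>) (U \<Otimes>\<^sub>M \<mu>) s) M \<Phi>"
    by (rule distr_distr[OF \<Phi> shift(1), symmetric])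
  also have "\<dots> = \<nu>"
    by (simp add: \<nu>_eq shift(2))
  finally show ?thesis
    using TM prob_space_orbit_average
    by (simp add: invariant_prob_def \<nu>_def sets_orbit_average M_def
        measurable_cong_sets[OF sets_orbit_average sets_orbit_average])
qed

lemma periodic_measure_orbit_average:
  assumes per: "\<And>x. x \<in> X \<Longrightarrow> (T ^^ L) (\<pi> x) = \<pi> x" and fin: "finite (\<pi> ` X)"
  shows "periodic_measure X T (orbit_average X T L \<pi> \<mu>)"
proof -
  define S where "S = (\<Union>k<L. (T ^^ k) ` \<pi> ` X)"
  have "\<pi> x \<in> X" if "x \<in> X" for x
    using measurable_space[OF \<pi>] that by (simp add: space_restrict_space)
  then have S: "finite S" "S \<subseteq> X"
    using fin dynamical_system_funpow_in[OF dyn] by (auto simp: S_def)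
  have "(\<lambda>(k, x). (T ^^ k) (\<pi> x)) -` S \<inter> space (uniform_count_measure {..<L} \<Otimes>\<^sub>M \<mu>)
      = space (uniform_count_measure {..<L} \<Otimes>\<^sub>M \<mu>)"
    by (force simp: space_orbit_product S_def)
  then have "emeasure (orbit_average X T L \<pi> \<mu>) S = 1"
    unfolding orbit_average_def using finite_in_sets_restrict_borel[OF S]
    by (simp add: emeasure_distr[OF orbit_map_measurable]
        prob_space.emeasure_space_1[OF prob_space_orbit_product])
  then show ?thesis
    using invariant_prob_orbit_average[OF per] S by (auto simp: periodic_measure_def)
qed

lemma integral_orbit_average:
  assumes f: "continuous_on X f"
  shows "(\<integral>y. f y \<partial>orbit_average X T L \<pi> \<mu>) = (\<Sum>k<L. \<integral>x. f ((T ^^ k) (\<pi> x)) \<partial>\<mu>) / L"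
proof -
  interpret U: prob_space "uniform_count_measure {..<L}"
    using L by (intro prob_space_uniform_count_measure) auto
  interpret \<mu>: prob_space \<mu>
    by (rule prob_\<mu>)
  interpret pair_prob_space "uniform_count_measure {..<L}" \<mu> ..
  have "(\<integral>y. f y \<partial>orbit_average X T L \<pi> \<mu>)
      = (\<integral>p. f ((\<lambda>(k, x). (T ^^ k) (\<pi> x)) p) \<partial>(uniform_count_measure {..<L} \<Otimes>\<^sub>M \<mu>))"
    unfolding orbit_average_def
    by (rule integral_distr[OF orbit_map_measurable borel_measurable_continuous_on_restrict[OF f]])
  also have "\<dots> = (\<integral>k. (\<integral>x. f ((T ^^ k) (\<pi> x)) \<partial>\<mu>) \<partial>uniform_count_measure {..<L})"
    using integrable_continuous_on_compose[OF _ orbit_map_measurable compact_dynamical_system[OF dyn] f]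
    by (subst integral_fst'[symmetric]) (auto intro: finite_measure_axioms)
  also have "\<dots> = (\<Sum>k<L. \<integral>x. f ((T ^^ k) (\<pi> x)) \<partial>\<mu>) / L"
    by (simp add: integral_uniform_count_measure)
  finally show ?thesis .
qed

lemma abs_integral_orbit_average_diff_le:
  fixes f :: "'a \<Rightarrow> real"
  assumes inv: "distr \<mu> \<mu> T = \<mu>" and f: "continuous_on X f"
    and close: "\<And>x k. x \<in> X \<Longrightarrow> k < L \<Longrightarrow> \<bar>f ((T ^^ k) (\<pi> x)) - f ((T ^^ k) x)\<bar> \<le> c"
  shows "\<bar>(\<integral>y. f y \<partial>orbit_average X T L \<pi> \<mu>) - (\<integral>x. f x \<partial>\<mu>)\<bar> \<le> c"
proof -
  interpret \<mu>: prob_space \<mu>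
    by (rule prob_\<mu>)
  have space_\<mu>: "space \<mu> = X"
    using sets_eq_imp_space_eq[OF sets_\<mu>] by (simp add: space_restrict_space)
  have TM: "T \<in> measurable (restrict_space borel X) (restrict_space borel X)"
    by (rule measurable_dynamical_system[OF dyn])
  then have T: "T \<in> measurable \<mu> \<mu>"
    by (simp add: measurable_cong_sets[OF sets_\<mu> sets_\<mu>])
  have Tk: "T ^^ k \<in> measurable \<mu> (restrict_space borel X)" for k
    using measurable_compose_n[OF TM] by (simp add: measurable_cong_sets[OF sets_\<mu> refl])
  have \<pi>_\<mu>: "\<pi> \<in> measurable \<mu> (restrict_space borel X)"
    using \<pi> by (simp add: measurable_cong_sets[OF sets_\<mu> refl])
  have int: "integrable \<mu> (\<lambda>x. f ((T ^^ k) (\<pi> x)))" "integrable \<mu> (\<lambda>x. f ((T ^^ k) x))" for k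
    using measurable_compose[OF \<pi>_\<mu> measurable_compose_n[OF TM]]
    by (auto intro!: integrable_continuous_on_compose[OF _ _ compact_dynamical_system[OF dyn] f] Tk
        \<mu>.finite_measure_axioms)
  have "f \<in> borel_measurable \<mu>"
    using borel_measurable_continuous_on_restrict[OF f] by (simp add: measurable_cong_sets[OF sets_\<mu> refl])
  then have "(\<integral>x. f x \<partial>\<mu>) = (\<Sum>k<L. \<integral>x. f ((T ^^ k) x) \<partial>\<mu>) / L"
    using integral_funpow_invariant[OF T inv] L by simp
  then have "\<bar>(\<integral>y. f y \<partial>orbit_average X T L \<pi> \<mu>) - (\<integral>x. f x \<partial>\<mu>)\<bar>
      = \<bar>\<Sum>k<L. (\<integral>x. f ((T ^^ k) (\<pi> x)) \<partial>\<mu>) - (\<integral>x. f ((T ^^ k) x) \<partial>\<mu>)\<bar> / L"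
    by (simp add: integral_orbit_average[OF f] sum_subtractf diff_divide_distrib[symmetric] abs_divide)
  also have "\<dots> \<le> (\<Sum>k<L. \<bar>(\<integral>x. f ((T ^^ k) (\<pi> x)) \<partial>\<mu>) - (\<integral>x. f ((T ^^ k) x) \<partial>\<mu>)\<bar>) / L"
    by (intro divide_right_mono sum_abs) auto
  also have "\<dots> \<le> (\<Sum>k<L. c) / L"
    using close int by (intro divide_right_mono sum_mono \<mu>.abs_integral_diff_le) (auto simp: space_\<mu>)
  also have "\<dots> = c"
    using L by simp
  finally show ?thesis .
qed

end

lemma dense_periodic_measuresI:
  fixes X :: "'a::metric_space set"
  assumes dyn: "dynamical_system X T"
    and approx: "\<And>F \<epsilon>. finite F \<Longrightarrow> \<forall>f\<in>F. continuous_on X (f :: 'a \<Rightarrow> real) \<Longrightarrow> 0 < \<epsilon> \<Longrightarrow>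
      \<exists>\<pi> L. 0 < L \<and> \<pi> \<in> measurable (restrict_space borel X) (restrict_space borel X) \<and>
        finite (\<pi> ` X) \<and> (\<forall>x\<in>X. (T ^^ L) (\<pi> x) = \<pi> x) \<and>
        (\<forall>x\<in>X. \<forall>k<L. \<forall>f\<in>F. \<bar>f ((T ^^ k) (\<pi> x)) - f ((T ^^ k) x)\<bar> \<le> \<epsilon>)"
  shows "dense_periodic_measures X T"
  unfolding dense_periodic_measures_def
proof (intro allI impI)
  fix \<mu> :: "'a measure" and F :: "('a \<Rightarrow> real) set" and \<epsilon> :: real
  assume inv: "invariant_prob X T \<mu>" and F: "finite F \<and> (\<forall>f\<in>F. continuous_on X f) \<and> 0 < \<epsilon>"
  then obtain \<pi> L where L: "0 < L" and \<pi>: "\<pi> \<in> measurable (restrict_space borel X) (restrict_space borel X)"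
    and fin: "finite (\<pi> ` X)" and per: "\<forall>x\<in>X. (T ^^ L) (\<pi> x) = \<pi> x"
    and close: "\<forall>x\<in>X. \<forall>k<L. \<forall>f\<in>F. \<bar>f ((T ^^ k) (\<pi> x)) - f ((T ^^ k) x)\<bar> \<le> \<epsilon> / 2"
    using approx[of F "\<epsilon> / 2"] by auto
  have \<mu>: "sets \<mu> = sets (restrict_space borel X)" "prob_space \<mu>" "distr \<mu> \<mu> T = \<mu>"
    using inv by (auto simp: invariant_prob_def)
  have "\<bar>(\<integral>y. f y \<partial>orbit_average X T L \<pi> \<mu>) - (\<integral>x. f x \<partial>\<mu>)\<bar> < \<epsilon>" if "f \<in> F" for f
  proof -
    have "\<bar>(\<integral>y. f y \<partial>orbit_average X T L \<pi> \<mu>) - (\<integral>x. f x \<partial>\<mu>)\<bar> \<le> \<epsilon> / 2"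
      by (rule abs_integral_orbit_average_diff_le[OF dyn \<mu>(1,2) \<pi> L \<mu>(3)]) (use F close that in auto)
    then show ?thesis
      using F by linarith
  qed
  then show "\<exists>\<nu>. periodic_measure X T \<nu> \<and> (\<forall>f\<in>F. \<bar>(\<integral>x. f x \<partial>\<nu>) - (\<integral>x. f x \<partial>\<mu>)\<bar> < \<epsilon>)"
    using periodic_measure_orbit_average[OF dyn \<mu>(1,2) \<pi> L] per fin by blast
qed

section \<open>Periodic measures live on periodic points\<close>

lemma finite_invariant_set_common_period:
  assumes "finite P" "inj_on T P" "T ` P \<subseteq> P"
  shows "\<exists>K>0. \<forall>x\<in>P. (T ^^ K) x = x"
proof -
  have "bij_betw T P P"
    using assms by (simp add: bij_betw_def endo_inj_surj)
  then have inj_funpow: "inj_on (T ^^ k) P" and funpow_in: "x \<in> P \<Longrightarrow> (T ^^ k) x \<in> P" for k x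
    using bij_betw_funpow[of T P k] by (auto simp: bij_betw_def)
  have "range (\<lambda>k. restrict (T ^^ k) P) \<subseteq> P \<rightarrow>\<^sub>E P"
    using funpow_in by auto
  moreover have "finite (P \<rightarrow>\<^sub>E P)"
    using assms(1) by (simp add: finite_PiE)
  ultimately have "finite (range (\<lambda>k. restrict (T ^^ k) P))"
    by (rule finite_subset)
  then have "\<not> inj (\<lambda>k. restrict (T ^^ k) P)"
    using range_inj_infinite by blast
  then obtain i j where ij: "i < j" "restrict (T ^^ i) P = restrict (T ^^ j) P"
    unfolding inj_def by (metis nat_neq_iff)
  have "(T ^^ (j - i)) x = x" if "x \<in> P" for x
  proof -
    have "(T ^^ i) ((T ^^ (j - i)) x) = (T ^^ j) x"
      using ij(1) by (metis comp_apply funpow_add le_add_diff_inverse less_imp_le)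
    also have "\<dots> = (T ^^ i) x"
      using fun_cong[OF ij(2), of x] that by simp
    finally have "(T ^^ i) ((T ^^ (j - i)) x) = (T ^^ i) x" .
    then show ?thesis
      using inj_funpow funpow_in that by (auto dest: inj_onD)
  qed
  then show ?thesis
    using ij(1) by (intro exI[of _ "j - i"]) auto
qed

lemma (in prob_space) AE_atoms:
  assumes "finite S" "S \<in> events" "prob S = 1" "\<And>s. s \<in> S \<Longrightarrow> {s} \<in> events"
  shows "AE x in M. x \<in> S \<and> 0 < prob {x}"
proof -
  have "AE x in M. x \<in> S"
    using assms(2,3) by (simp add: prob_eq_1)
  moreover have "AE x in M. \<forall>s\<in>{s \<in> S. prob {s} = 0}. x \<noteq> s"
    using assms(1,4) by (intro AE_finite_allI) (auto simp: prob_eq_0)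
  ultimately show ?thesis
    by eventually_elim (auto simp: zero_less_measure_iff)
qed

lemma measure_singleton_image:
  fixes X :: "'a::metric_space set"
  assumes dyn: "dynamical_system X T" and \<nu>: "invariant_prob X T \<nu>" and s: "s \<in> X"
  shows "measure \<nu> {T s} = measure \<nu> {s}"
proof -
  have sets_\<nu>: "sets \<nu> = sets (restrict_space borel X)"
    and T: "T \<in> measurable \<nu> \<nu>" and inv: "distr \<nu> \<nu> T = \<nu>"
    using \<nu> by (auto simp: invariant_prob_def)
  have space_\<nu>: "space \<nu> = X"
    using sets_eq_imp_space_eq[OF sets_\<nu>] by (simp add: space_restrict_space)
  have "T s \<in> X"
    using dynamical_system_image[OF dyn] s by blast
  then have "{T s} \<in> sets \<nu>"
    unfolding sets_\<nu> by (intro finite_in_sets_restrict_borel) auto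
  moreover have "T -` {T s} \<inter> space \<nu> = {s}"
    using inj_onD[OF dynamical_system_inj_on[OF dyn]] s by (auto simp: space_\<nu>)
  ultimately have "emeasure (distr \<nu> \<nu> T) {T s} = emeasure \<nu> {s}"
    using emeasure_distr[OF T] by simp
  then show ?thesis
    using inv by (simp add: measure_def)
qed

text \<open>The witness is the set of atoms.\<close>
lemma periodic_measure_AE_finite_invariant:
  fixes X :: "'a::metric_space set"
  assumes dyn: "dynamical_system X T" and \<nu>: "periodic_measure X T \<nu>"
  shows "\<exists>P. finite P \<and> P \<subseteq> X \<and> T ` P \<subseteq> P \<and> (AE x in \<nu>. x \<in> P)"
proof -
  obtain S where S: "finite S" "S \<subseteq> X" "emeasure \<nu> S = 1"
    using \<nu> by (auto simp: periodic_measure_def)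
  have sets_\<nu>: "sets \<nu> = sets (restrict_space borel X)" and "prob_space \<nu>"
    and inv: "invariant_prob X T \<nu>"
    using \<nu> by (auto simp: periodic_measure_def invariant_prob_def)
  interpret prob_space \<nu> by fact
  have space_\<nu>: "space \<nu> = X"
    using sets_eq_imp_space_eq[OF sets_\<nu>] by (simp add: space_restrict_space)
  have finite_sets: "A \<in> sets \<nu>" if "finite A" "A \<subseteq> X" for A
    unfolding sets_\<nu> using that by (rule finite_in_sets_restrict_borel)
  have atoms: "AE x in \<nu>. x \<in> S \<and> 0 < prob {x}"
    using S by (intro AE_atoms finite_sets) (auto simp: emeasure_eq_measure)
  define P where "P = {s \<in> X. 0 < prob {s}}"
  have "P \<subseteq> S"
  proof
    fix s assume s: "s \<in> P"
    show "s \<in> S"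
    proof (rule ccontr)
      assume "s \<notin> S"
      from atoms have "AE x in \<nu>. x \<notin> {s}"
        by eventually_elim (use \<open>s \<notin> S\<close> in auto)
      then have "prob {s} = 0"
        using s finite_sets[of "{s}"] by (simp add: prob_eq_0 P_def)
      then show False
        using s by (simp add: P_def)
    qed
  qed
  then have "finite P"
    using S(1) by (rule finite_subset)
  moreover have "T ` P \<subseteq> P"
    using measure_singleton_image[OF dyn inv] dynamical_system_image[OF dyn] by (auto simp: P_def)
  moreover from atoms have "AE x in \<nu>. x \<in> P"
    by eventually_elim (use S(2) in \<open>auto simp: P_def\<close>)
  ultimately show ?thesis
    by (intro exI[of _ P]) (auto simp: P_def)
qed

lemma periodic_measure_AE_periodic:
  fixes X :: "'a::metric_space set"
  assumes dyn: "dynamical_system X T" and \<nu>: "periodic_measure X T \<nu>"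
  shows "\<exists>K>0. AE x in \<nu>. (T ^^ K) x = x"
proof -
  obtain P where P: "finite P" "P \<subseteq> X" "T ` P \<subseteq> P" and AE: "AE x in \<nu>. x \<in> P"
    using periodic_measure_AE_finite_invariant[OF assms] by blast
  moreover have "inj_on T P"
    using dynamical_system_inj_on[OF dyn] P(2) by (rule inj_on_subset)
  ultimately obtain K where K: "0 < K" "\<forall>x\<in>P. (T ^^ K) x = x"
    using finite_invariant_set_common_period by blast
  from AE have "AE x in \<nu>. (T ^^ K) x = x"
    by eventually_elim (use K in auto)
  then show ?thesis
    using K by blast
qed

lemma integral_eq_0_if_periodic_orbit_sums_eq_0:
  fixes h :: "'a::metric_space \<Rightarrow> real"
  assumes dyn: "dynamical_system X T" and \<nu>: "invariant_prob X T \<nu>" and K: "0 < K"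
    and AE: "AE x in \<nu>. (T ^^ K) x = x" and h: "continuous_on X h"
    and sums: "\<And>x. x \<in> X \<Longrightarrow> (T ^^ K) x = x \<Longrightarrow> (\<Sum>k<K. h ((T ^^ k) x)) = 0"
  shows "(\<integral>x. h x \<partial>\<nu>) = 0"
proof -
  have sets_\<nu>: "sets \<nu> = sets (restrict_space borel X)" and "prob_space \<nu>"
    and T: "T \<in> measurable \<nu> \<nu>" and inv: "distr \<nu> \<nu> T = \<nu>"
    using \<nu> by (auto simp: invariant_prob_def)
  interpret prob_space \<nu> by fact
  have space_\<nu>: "space \<nu> = X"
    using sets_eq_imp_space_eq[OF sets_\<nu>] by (simp add: space_restrict_space)
  have h_meas: "h \<in> borel_measurable \<nu>"
    using borel_measurable_continuous_on_restrict[OF h] by (simp add: measurable_cong_sets[OF sets_\<nu> refl])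
  have "integrable \<nu> (\<lambda>x. h ((T ^^ k) x))" for k
    using measurable_compose_n[OF T, of k] compact_dynamical_system[OF dyn] h
    by (intro integrable_continuous_on_compose finite_measure_axioms)
      (auto simp: measurable_cong_sets[OF refl sets_\<nu>, symmetric])
  then have "real K * (\<integral>x. h x \<partial>\<nu>) = (\<integral>x. (\<Sum>k<K. h ((T ^^ k) x)) \<partial>\<nu>)"
    using integral_funpow_invariant[OF T inv h_meas] by (simp add: Bochner_Integration.integral_sum)
  also have "\<dots> = (\<integral>x. 0 \<partial>\<nu>)"
    using AE by (intro integral_cong_AE)
      (auto simp: space_\<nu> sums intro!: borel_measurable_sum measurable_compose[OF measurable_compose_n[OF T] h_meas])
  finally show ?thesis
    using K by simp
qed

lemma not_dense_periodic_measuresI: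
  fixes h :: "'a::topological_space \<Rightarrow> real"
  assumes "invariant_prob X T \<mu>" "continuous_on X h" "(\<integral>x. h x \<partial>\<mu>) \<noteq> 0"
    and "\<And>\<nu>. periodic_measure X T \<nu> \<Longrightarrow> (\<integral>x. h x \<partial>\<nu>) = 0"
  shows "\<not> dense_periodic_measures X T"
proof
  assume "dense_periodic_measures X T"
  from this[unfolded dense_periodic_measures_def, rule_format, OF assms(1), of "{h}" "\<bar>\<integral>x. h x \<partial>\<mu>\<bar>"]
  obtain \<nu> where
    "periodic_measure X T \<nu>" "\<bar>(\<integral>x. h x \<partial>\<nu>) - (\<integral>x. h x \<partial>\<mu>)\<bar> < \<bar>\<integral>x. h x \<partial>\<mu>\<bar>"
    using assms(2,3) by auto
  then show False
    using assms(4) by simp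
qed

section \<open>A Liouville number\<close>

definition liouville_term :: "nat \<Rightarrow> real" where
  "liouville_term k = (1 / 2) ^ fact (Suc k)"

definition liouville_approx :: "nat \<Rightarrow> real" where
  "liouville_approx j = (\<Sum>k<j. liouville_term k)"

definition liouville :: real where
  "liouville = (\<Sum>k. liouville_term k)"

lemma liouville_term_pos: "0 < liouville_term k"
  by (simp add: liouville_term_def)

lemma liouville_term_le_geometric: "liouville_term k \<le> (1 / 2) ^ Suc k"
  unfolding liouville_term_def
  by (rule power_decreasing) (use fact_ge_self[of "Suc k"] in auto)

lemma summable_liouville_term: "summable liouville_term"
  by (rule summable_comparison_test[where g="\<lambda>k. (1 / 2 :: real) ^ Suc k"])
    (use liouville_term_le_geometric liouville_term_pos in \<open>auto intro!: exI[of _ 0] simp: less_imp_le\<close>)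

lemma liouville_term_Suc_le: "liouville_term (Suc k) \<le> liouville_term k / 2"
proof -
  have "Suc (fact (Suc k)) \<le> 2 * fact (Suc k)"
    using fact_ge_1[of "Suc k", where 'a=nat] by linarith
  also have "\<dots> \<le> (Suc (Suc k)) * (fact (Suc k) :: nat)"
    by (intro mult_right_mono) auto
  finally have "(1 / 2 :: real) ^ fact (Suc (Suc k)) \<le> (1 / 2) ^ Suc (fact (Suc k))"
    by (intro power_decreasing) auto
  then show ?thesis
    by (simp add: liouville_term_def)
qed

lemma liouville_term_add_le: "liouville_term (j + i) \<le> liouville_term j * (1 / 2) ^ i"
proof (induction i)
  case (Suc i)
  have "liouville_term (j + Suc i) \<le> liouville_term (j + i) / 2"
    using liouville_term_Suc_le[of "j + i"] by simp
  also have "\<dots> \<le> liouville_term j * (1 / 2) ^ i / 2"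
    using Suc by simp
  finally show ?case
    by simp
qed simp

lemma liouville_approx_tendsto: "liouville_approx \<longlonglongrightarrow> liouville"
  unfolding liouville_approx_def liouville_def
  using summable_liouville_term by (simp add: summable_LIMSEQ)

lemma liouville_tail_eq: "liouville - liouville_approx j = (\<Sum>i. liouville_term (i + j))"
  unfolding liouville_def liouville_approx_def
  using suminf_split_initial_segment[OF summable_liouville_term, of j] by simp

lemma liouville_approx_less: "liouville_approx j < liouville"
proof -
  have "summable (\<lambda>i. liouville_term (i + j))"
    using summable_liouville_term by (simp add: summable_iff_shift)
  then have "0 < (\<Sum>i. liouville_term (i + j))"
    using liouville_term_pos by (intro suminf_pos) auto
  then show ?thesis
    using liouville_tail_eq[of j] by linarith
qed

lemma liouville_tail_le: "liouville - liouville_approx j \<le> 2 * liouville_term j"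
proof -
  have "summable (\<lambda>i. liouville_term (i + j))"
    using summable_liouville_term by (simp add: summable_iff_shift)
  then have "(\<Sum>i. liouville_term (i + j)) \<le> (\<Sum>i. liouville_term j * (1 / 2) ^ i)"
    using liouville_term_add_le[of j]
    by (intro suminf_le summable_mult summable_geometric) (auto simp: add.commute)
  also have "\<dots> = 2 * liouville_term j"
    using suminf_geometric[of "1 / 2 :: real"] by (simp add: suminf_mult)
  finally show ?thesis
    using liouville_tail_eq by simp
qed

lemma liouville_approx_nonneg: "0 \<le> liouville_approx j"
  unfolding liouville_approx_def using liouville_term_pos by (simp add: sum_nonneg less_imp_le)

lemma liouville_le_1: "liouville \<le> 1"
proof -
  have "liouville \<le> (\<Sum>k. (1 / 2 :: real) ^ Suc k)"
    unfolding liouville_def using liouville_term_le_geometric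
    by (intro suminf_le summable_liouville_term) (auto intro: summable_mult summable_geometric)
  also have "\<dots> = 1"
    using suminf_divide[OF summable_geometric[of "1 / 2 :: real"], of 2]
      suminf_geometric[of "1 / 2 :: real"] by simp
  finally show ?thesis .
qed

lemma strict_mono_liouville_approx: "strict_mono liouville_approx"
  by (rule strict_monoI_Suc) (simp add: liouville_approx_def liouville_term_pos)

lemma liouville_approx_scaled_Ints:
  assumes "i \<le> j"
  shows "2 ^ fact j * liouville_approx i \<in> \<int>"
proof -
  have "2 ^ fact j * liouville_approx i = (\<Sum>k<i. (2 :: real) ^ (fact j - fact (Suc k)))"
    unfolding liouville_approx_def sum_distrib_left
  proof (rule sum.cong)
    fix k assume "k \<in> {..<i}"
    then have "fact (Suc k) \<le> (fact j :: nat)"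
      using assms by (intro fact_mono) auto
    then show "2 ^ fact j * liouville_term k = (2 :: real) ^ (fact j - fact (Suc k))"
      by (simp add: liouville_term_def power_diff power_one_over field_simps)
  qed simp
  also have "\<dots> \<in> \<int>"
    by (intro Ints_sum) auto
  finally show ?thesis .
qed

lemma liouville_tail_scaled_le: "2 ^ fact j * (liouville - liouville_approx j) \<le> 2 * (1 / 2) ^ j"
proof -
  have fact_Suc: "fact (Suc j) = fact j + j * (fact j :: nat)"
    by simp
  have "2 ^ fact j * (liouville - liouville_approx j) \<le> 2 ^ fact j * (2 * liouville_term j)"
    using liouville_tail_le[of j] by (intro mult_left_mono) auto
  also have "\<dots> = 2 * (1 / 2) ^ (j * fact j)"
    unfolding liouville_term_def fact_Suc by (simp add: power_add power_one_over field_simps)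
  also have "\<dots> \<le> 2 * (1 / 2) ^ j"
  proof -
    have "j \<le> j * (fact j :: nat)"
      using fact_ge_1[of j, where 'a=nat] by simp
    then show ?thesis
      by (intro mult_left_mono power_decreasing) auto
  qed
  finally show ?thesis .
qed

text \<open>The approximations are too good for a rational number: with \<open>j = 2K\<close>, the number
  \<open>K 2^j! (liouville - liouville_approx j)\<close> would be an integer strictly between 0 and 1.\<close>
lemma of_nat_mult_liouville_not_Ints:
  assumes "0 < K"
  shows "real K * liouville \<notin> \<int>"
proof
  assume K_liouville: "real K * liouville \<in> \<int>"
  define j where "j = 2 * K"
  define d where "d = real K * (2 ^ fact j * (liouville - liouville_approx j))"
  have "d = 2 ^ fact j * (real K * liouville) - real K * (2 ^ fact j * liouville_approx j)"
    by (simp add: d_def algebra_simps)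
  also have "\<dots> \<in> \<int>"
  proof (rule Ints_diff)
    show "2 ^ fact j * (real K * liouville) \<in> \<int>"
      by (rule Ints_mult[OF _ K_liouville]) simp
    show "real K * (2 ^ fact j * liouville_approx j) \<in> \<int>"
      by (rule Ints_mult[OF Ints_of_nat liouville_approx_scaled_Ints]) simp
  qed
  finally have "d \<in> \<int>" .
  moreover have d_pos: "0 < d"
    using assms liouville_approx_less[of j] by (simp add: d_def)
  moreover have "d \<le> real K * (2 * (1 / 2) ^ j)"
    unfolding d_def using liouville_tail_scaled_le[of j] by (intro mult_left_mono) auto
  moreover have "real K * (2 * (1 / 2) ^ j) < 1"
  proof -
    have "real (2 * K) < 2 ^ (2 * K)"
      by (metis of_nat_less_two_power of_nat_numeral of_nat_power)
    then show ?thesis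
      unfolding j_def by (simp add: power_one_over field_simps)
  qed
  ultimately have "1 \<le> d" and "d < 1"
    using Ints_nonzero_abs_ge1[of d] by auto
  then show False
    by simp
qed

lemma liouville_approx_diff_not_Ints:
  assumes "i \<noteq> j"
  shows "liouville_approx i - liouville_approx j \<notin> \<int>"
proof
  assume "liouville_approx i - liouville_approx j \<in> \<int>"
  moreover have "\<bar>liouville_approx i - liouville_approx j\<bar> < 1"
    using liouville_approx_nonneg[of i] liouville_approx_nonneg[of j] liouville_approx_less[of i]
      liouville_approx_less[of j] liouville_le_1 by linarith
  ultimately have "liouville_approx i - liouville_approx j = 0"
    using Ints_nonzero_abs_ge1 by (meson not_le)
  then have "liouville_approx i = liouville_approx j"
    by simp
  then show False
    using assms strict_mono_eq[OF strict_mono_liouville_approx] by blast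
qed

lemma liouville_rotation_tail_le:
  "(1 + 2 * pi * 2 ^ fact j) * (liouville - liouville_approx j) \<le> 18 * (1 / 2) ^ j"
proof -
  define d where "d = liouville - liouville_approx j"
  have "0 \<le> d" "2 ^ fact j * d \<le> 2 * (1 / 2) ^ j"
    using liouville_approx_less[of j] liouville_tail_scaled_le[of j] by (auto simp: d_def)
  have "d \<le> 2 ^ fact j * d"
    using mult_right_mono[of 1 "2 ^ fact j" d] \<open>0 \<le> d\<close> by simp
  then have "(1 + 2 * pi * 2 ^ fact j) * d \<le> (1 + 2 * pi) * (2 ^ fact j * d)"
    by (simp add: algebra_simps)
  also have "\<dots> \<le> (1 + 2 * pi) * (2 * (1 / 2) ^ j)"
    using \<open>2 ^ fact j * d \<le> _\<close> by (intro mult_left_mono) auto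
  also have "\<dots> \<le> 9 * (2 * (1 / 2) ^ j)"
    using pi_less_4 by (intro mult_right_mono) auto
  finally show ?thesis
    by (simp add: d_def)
qed

section \<open>Skew rotations of circle bundles\<close>

definition cyl :: "real \<Rightarrow> complex \<Rightarrow> nat \<Rightarrow> real" where
  "cyl b z = (\<lambda>n. if n = 0 then b else if n = 1 then Re z else if n = 2 then Im z else 0)"

definition rot :: "(nat \<Rightarrow> real) \<Rightarrow> nat \<Rightarrow> real" where
  "rot x = cyl (x 0) (Complex (x 1) (x 2) * cis (2 * pi * x 0))"

definition rot_inv :: "(nat \<Rightarrow> real) \<Rightarrow> nat \<Rightarrow> real" where
  "rot_inv x = cyl (x 0) (Complex (x 1) (x 2) * cis (- (2 * pi * x 0)))"

definition circles :: "real set \<Rightarrow> (nat \<Rightarrow> real) set" where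
  "circles B = (\<lambda>(b, z). cyl b z) ` (B \<times> sphere 0 1)"

lemma cyl_apply [simp]: "cyl b z 0 = b" "cyl b z (Suc 0) = Re z" "cyl b z 2 = Im z"
  by (auto simp: cyl_def)

lemma cyl_eq_iff [simp]: "cyl b z = cyl b' z' \<longleftrightarrow> b = b' \<and> z = z'"
proof
  assume "cyl b z = cyl b' z'"
  then have "cyl b z 0 = cyl b' z' 0" "cyl b z 1 = cyl b' z' 1" "cyl b z 2 = cyl b' z' 2"
    by auto
  then show "b = b' \<and> z = z'"
    by (simp add: complex_eq_iff)
qed simp

lemma rot_cyl [simp]: "rot (cyl b z) = cyl b (z * cis (2 * pi * b))"
  by (simp add: rot_def)

lemma rot_inv_cyl [simp]: "rot_inv (cyl b z) = cyl b (z * cis (- (2 * pi * b)))"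
  by (simp add: rot_inv_def)

lemma funpow_rot_cyl: "(rot ^^ k) (cyl b z) = cyl b (z * cis (2 * pi * b * k))"
proof (induction k)
  case (Suc k)
  have "cis (2 * pi * b * k) * cis (2 * pi * b) = cis (2 * pi * b * Suc k)"
    by (simp add: cis_mult algebra_simps)
  then show ?case
    using Suc by (simp add: mult.assoc)
qed simp

lemma mem_circles_iff: "x \<in> circles B \<longleftrightarrow> (\<exists>b z. x = cyl b z \<and> b \<in> B \<and> norm z = 1)"
  unfolding circles_def by force

lemma continuous_on_cyl: "continuous_on S (\<lambda>(b, z). cyl b z)"
proof (rule continuous_on_coordinatewise_then_product)
  fix i
  show "continuous_on S (\<lambda>p. (case p of (b, z) \<Rightarrow> cyl b z) i)"
    unfolding cyl_def split_beta
    by (cases "i = 0"; cases "i = 1"; cases "i = 2") (auto intro!: continuous_intros)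
qed

lemma continuous_on_cyl_compose:
  assumes "continuous_on S f" "continuous_on S g"
  shows "continuous_on S (\<lambda>x. cyl (f x) (g x))"
  using continuous_on_compose[OF continuous_on_Pair[OF assms] continuous_on_cyl]
  by (simp add: o_def)

lemma continuous_on_coordinate: "continuous_on S (\<lambda>x :: nat \<Rightarrow> real. x i)"
  by (rule continuous_on_subset[OF continuous_on_product_coordinates]) auto

lemma continuous_on_rot: "continuous_on S rot"
  and continuous_on_rot_inv: "continuous_on S rot_inv"
  unfolding rot_def rot_inv_def Complex_eq
  by (intro continuous_on_cyl_compose continuous_on_coordinate continuous_intros)+

lemma compact_circles: "compact B \<Longrightarrow> compact (circles B)"
  unfolding circles_def
  by (intro compact_continuous_image continuous_on_cyl compact_Times compact_sphere)

lemma rot_in_circles: "x \<in> circles B \<Longrightarrow> rot x \<in> circles B"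
  and rot_inv_in_circles: "x \<in> circles B \<Longrightarrow> rot_inv x \<in> circles B"
  by (auto simp: mem_circles_iff norm_mult)

lemma rot_inv_rot: "x \<in> circles B \<Longrightarrow> rot_inv (rot x) = x"
  and rot_rot_inv: "x \<in> circles B \<Longrightarrow> rot (rot_inv x) = x"
  by (auto simp: mem_circles_iff mult.assoc cis_mult)

lemma dynamical_system_circles:
  assumes "compact B"
  shows "dynamical_system (circles B) rot"
proof -
  have "homeomorphism (circles B) (circles B) rot rot_inv"
    using rot_in_circles rot_inv_in_circles rot_inv_rot rot_rot_inv
    by (intro homeomorphismI continuous_on_rot continuous_on_rot_inv) auto
  then show ?thesis
    using compact_circles[OF assms] by (auto simp: dynamical_system_def)
qed

lemma norm_cis_minus_1_le: "norm (cis t - 1) \<le> \<bar>t\<bar>"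
proof -
  have "(norm (cis t - 1))\<^sup>2 = (cos t - 1)\<^sup>2 + (sin t)\<^sup>2"
    by (simp add: cmod_power2)
  also have "\<dots> = 4 * (sin (t / 2))\<^sup>2"
    using cos_double_sin[of "t / 2"] by (simp add: power2_eq_square algebra_simps sin_squared_eq)
  also have "\<dots> \<le> 4 * (t / 2)\<^sup>2"
  proof -
    have "(sin (t / 2))\<^sup>2 \<le> (t / 2)\<^sup>2"
      using abs_sin_x_le_abs_x[of "t / 2"] abs_le_square_iff by blast
    then show ?thesis
      by simp
  qed
  also have "\<dots> = \<bar>t\<bar>\<^sup>2"
    by (simp add: power2_eq_square)
  finally show ?thesis
    by (rule power2_le_imp_le) simp
qed

lemma norm_cis_diff_le: "norm (cis a - cis b) \<le> \<bar>a - b\<bar>"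
proof -
  have "cis a - cis b = cis b * (cis (a - b) - 1)"
    by (simp add: algebra_simps cis_mult)
  then show ?thesis
    using norm_cis_minus_1_le[of "a - b"] by (simp add: norm_mult)
qed

lemma dist_Pair_le_add: "dist (a, w) (b, v) \<le> dist a b + dist w v"
  unfolding dist_Pair_Pair using sqrt_sum_squares_le_sum_abs[of "dist a b" "dist w v"] by simp

lemma dist_rot_orbit_le:
  fixes k :: nat
  assumes "norm z = 1"
  shows "dist (b', z' * cis (2 * pi * b' * k)) (b, z * cis (2 * pi * b * k))
    \<le> norm (z' - z) + (1 + 2 * pi * k) * \<bar>b' - b\<bar>"
proof -
  have "norm (z' * cis (2 * pi * b' * k) - z * cis (2 * pi * b * k))
      \<le> norm ((z' - z) * cis (2 * pi * b' * k)) + norm (z * (cis (2 * pi * b' * k) - cis (2 * pi * b * k)))"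
    by (rule order_trans[OF _ norm_triangle_ineq]) (simp add: algebra_simps)
  also have "\<dots> \<le> norm (z' - z) + \<bar>2 * pi * b' * k - 2 * pi * b * k\<bar>"
    using assms norm_cis_diff_le[of "2 * pi * b' * k" "2 * pi * b * k"] by (simp add: norm_mult)
  also have "\<bar>2 * pi * b' * k - 2 * pi * b * k\<bar> = 2 * pi * k * \<bar>b' - b\<bar>"
  proof -
    have "2 * pi * b' * k - 2 * pi * b * k = (2 * pi * k) * (b' - b)"
      by (simp add: algebra_simps)
    then show ?thesis
      by (simp add: abs_mult)
  qed
  finally have z_dist: "dist (z' * cis (2 * pi * b' * k)) (z * cis (2 * pi * b * k))
      \<le> norm (z' - z) + 2 * pi * k * \<bar>b' - b\<bar>"
    by (simp add: dist_norm)
  have "dist (b', z' * cis (2 * pi * b' * k)) (b, z * cis (2 * pi * b * k))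
      \<le> \<bar>b' - b\<bar> + dist (z' * cis (2 * pi * b' * k)) (z * cis (2 * pi * b * k))"
    by (metis dist_Pair_le_add dist_real_def)
  also have "\<dots> \<le> norm (z' - z) + (1 + 2 * pi * k) * \<bar>b' - b\<bar>"
    using z_dist by (simp add: algebra_simps)
  finally show ?thesis .
qed

section \<open>Dense periodic measures over the Liouville base\<close>

lemma abs_floor_mult_div_diff_le:
  assumes "0 < Q"
  shows "\<bar>\<lfloor>Q * x\<rfloor> / Q - x\<bar> \<le> 1 / (Q :: real)"
proof -
  have "\<lfloor>Q * x\<rfloor> / Q - x = (\<lfloor>Q * x\<rfloor> - Q * x) / Q"
    using assms by (simp add: field_simps)
  moreover have "\<bar>\<lfloor>Q * x\<rfloor> - Q * x\<bar> \<le> 1"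
    by linarith
  ultimately show ?thesis
    using assms by (simp add: divide_right_mono)
qed

lemma norm_sgn_diff_le:
  fixes w z :: "'a::real_normed_vector"
  assumes "norm z = 1"
  shows "norm (sgn w - z) \<le> 2 * norm (w - z)"
proof (cases "w = 0")
  case False
  have "sgn w - w = (1 / norm w - 1) *\<^sub>R w"
    by (simp add: sgn_div_norm algebra_simps inverse_eq_divide)
  then have "norm (sgn w - w) = \<bar>norm z - norm w\<bar>"
    using False assms by (simp add: abs_mult_pos' field_simps abs_minus_commute)
  also have "\<dots> \<le> norm (w - z)"
    by (metis norm_triangle_ineq3 norm_minus_commute)
  finally show ?thesis
    using norm_triangle_ineq[of "sgn w - w" "w - z"] by simp
qed (use assms in simp)

definition grid_round :: "nat \<Rightarrow> complex \<Rightarrow> complex" where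
  "grid_round Q z = sgn (Complex (\<lfloor>Q * Re z\<rfloor> / Q) (\<lfloor>Q * Im z\<rfloor> / Q))"

lemma grid_round_close:
  assumes Q: "3 \<le> Q" and z: "norm z = 1"
  shows "norm (grid_round Q z) = 1" "norm (grid_round Q z - z) \<le> 4 / Q"
proof -
  define w where "w = Complex (\<lfloor>Q * Re z\<rfloor> / Q) (\<lfloor>Q * Im z\<rfloor> / Q)"
  have "norm (w - z) \<le> \<bar>Re (w - z)\<bar> + \<bar>Im (w - z)\<bar>"
    by (rule cmod_le)
  also have "\<dots> \<le> 2 / Q"
    using abs_floor_mult_div_diff_le[of Q "Re z"] abs_floor_mult_div_diff_le[of Q "Im z"] Q
    by (simp add: w_def)
  finally have wz: "norm (w - z) \<le> 2 / Q" .
  moreover have "2 / Q < (1 :: real)"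
    using Q by (simp add: field_simps)
  ultimately have "w \<noteq> 0"
    using z by auto
  then show "norm (grid_round Q z) = 1"
    by (simp add: grid_round_def norm_sgn flip: w_def)
  show "norm (grid_round Q z - z) \<le> 4 / Q"
    using norm_sgn_diff_le[OF z, of w] wz by (simp add: grid_round_def flip: w_def)
qed

lemma finite_grid_round_image: "finite (grid_round Q ` sphere 0 1)"
proof -
  let ?I = "{- int Q..int Q}"
  have bound: "\<lfloor>Q * y\<rfloor> \<in> ?I" if "\<bar>y\<bar> \<le> 1" for y :: real
  proof -
    have "real Q * \<bar>y\<bar> \<le> real Q * 1"
      using that by (intro mult_left_mono) auto
    then have "\<bar>Q * y\<bar> \<le> Q"
      by (simp add: abs_mult)
    then show ?thesis
      by (simp add: abs_le_iff le_floor_iff floor_le_iff)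
  qed
  have "grid_round Q ` sphere 0 1 \<subseteq> (\<lambda>(i, j). sgn (Complex (i / Q) (j / Q))) ` (?I \<times> ?I)"
  proof
    fix w assume "w \<in> grid_round Q ` sphere 0 1"
    then obtain z where "norm z = 1" "w = grid_round Q z"
      by auto
    moreover have "\<bar>Re z\<bar> \<le> 1" "\<bar>Im z\<bar> \<le> 1"
      using abs_Re_le_cmod[of z] abs_Im_le_cmod[of z] \<open>norm z = 1\<close> by auto
    ultimately show "w \<in> (\<lambda>(i, j). sgn (Complex (i / Q) (j / Q))) ` (?I \<times> ?I)"
      using bound unfolding grid_round_def by force
  qed
  then show ?thesis
    by (rule finite_subset) simp
qed

lemma borel_measurable_grid_round [measurable]: "grid_round Q \<in> borel_measurable borel"
  unfolding grid_round_def Complex_eq by measurable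

definition base :: "(nat \<Rightarrow> nat) \<Rightarrow> real set" where
  "base \<sigma> = insert liouville (range (\<lambda>m. liouville_approx (\<sigma> m)))"

lemma compact_base:
  assumes "strict_mono \<sigma>"
  shows "compact (base \<sigma>)"
proof -
  have "(\<lambda>m. liouville_approx (\<sigma> m)) \<longlonglongrightarrow> liouville"
    using LIMSEQ_subseq_LIMSEQ[OF liouville_approx_tendsto assms] by (simp add: o_def)
  then show ?thesis
    unfolding base_def by (rule compact_sequence_with_limit)
qed

lemma base_subset:
  assumes "strict_mono \<sigma>"
  shows "base \<sigma> \<subseteq> (\<lambda>m. liouville_approx (\<sigma> m)) ` {..<N} \<union> {liouville_approx (\<sigma> N)..liouville}"
proof -
  have "m < N \<or> liouville_approx (\<sigma> N) \<le> liouville_approx (\<sigma> m)" for m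
    using assms strict_mono_liouville_approx by (cases "N \<le> m") (auto simp: strict_mono_less_eq)
  then show ?thesis
    using liouville_approx_less[of "\<sigma> N"] liouville_approx_less
    by (fastforce simp: base_def less_imp_le)
qed

definition round_base :: "(nat \<Rightarrow> nat) \<Rightarrow> nat \<Rightarrow> real \<Rightarrow> real" where
  "round_base \<sigma> N b =
    (if b \<in> (\<lambda>m. liouville_approx (\<sigma> m)) ` {..<N} then b else liouville_approx (\<sigma> N))"

lemma round_base_in_base: "round_base \<sigma> N b \<in> base \<sigma>"
  by (auto simp: round_base_def base_def)

lemma round_base_eq_liouville_approx:
  assumes "strict_mono \<sigma>"
  shows "\<exists>i\<le>\<sigma> N. round_base \<sigma> N b = liouville_approx i"
proof (cases "b \<in> (\<lambda>m. liouville_approx (\<sigma> m)) ` {..<N}")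
  case True
  then obtain m where "m < N" "b = liouville_approx (\<sigma> m)"
    by auto
  then show ?thesis
    using assms by (intro exI[of _ "\<sigma> m"]) (auto simp: round_base_def strict_mono_less_eq)
qed (auto simp: round_base_def)

lemma abs_round_base_diff_le:
  assumes "strict_mono \<sigma>" "b \<in> base \<sigma>"
  shows "\<bar>round_base \<sigma> N b - b\<bar> \<le> liouville - liouville_approx (\<sigma> N)"
  using base_subset[OF assms(1), of N] assms(2) liouville_approx_less[of "\<sigma> N"]
  by (auto simp: round_base_def)

definition circles_proj :: "(nat \<Rightarrow> nat) \<Rightarrow> nat \<Rightarrow> nat \<Rightarrow> (nat \<Rightarrow> real) \<Rightarrow> nat \<Rightarrow> real" where
  "circles_proj \<sigma> N Q x = cyl (round_base \<sigma> N (x 0)) (grid_round Q (Complex (x 1) (x 2)))"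

lemma circles_proj_cyl [simp]:
  "circles_proj \<sigma> N Q (cyl b z) = cyl (round_base \<sigma> N b) (grid_round Q z)"
  by (simp add: circles_proj_def complex_surj)

lemma circles_proj_in_circles:
  "3 \<le> Q \<Longrightarrow> x \<in> circles (base \<sigma>) \<Longrightarrow> circles_proj \<sigma> N Q x \<in> circles (base \<sigma>)"
  by (auto simp: mem_circles_iff round_base_in_base grid_round_close)

lemma circles_proj_measurable:
  assumes "3 \<le> Q"
  shows "circles_proj \<sigma> N Q
    \<in> measurable (restrict_space borel (circles (base \<sigma>))) (restrict_space borel (circles (base \<sigma>)))"
proof (rule measurable_restrict_space2)
  show "circles_proj \<sigma> N Q \<in> space (restrict_space borel (circles (base \<sigma>))) \<rightarrow> circles (base \<sigma>)"
    using circles_proj_in_circles[OF assms] by (auto simp: space_restrict_space)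
  have "(\<lambda>m. liouville_approx (\<sigma> m)) ` {..<N} \<in> sets borel"
    by (intro borel_closed finite_imp_closed) auto
  then have "round_base \<sigma> N \<in> borel_measurable borel"
    unfolding round_base_def by measurable
  then have "(\<lambda>x :: nat \<Rightarrow> real. (round_base \<sigma> N (x 0), grid_round Q (Complex (x 1) (x 2)))) \<in> borel_measurable borel"
    unfolding Complex_eq by measurable
  from measurable_compose[OF this borel_measurable_continuous_onI[OF continuous_on_cyl]]
  show "circles_proj \<sigma> N Q \<in> borel_measurable (restrict_space borel (circles (base \<sigma>)))"
    by (intro measurable_restrict_space1) (simp add: circles_proj_def[abs_def])
qed

lemma finite_circles_proj_image: "finite (circles_proj \<sigma> N Q ` circles B)"
proof (rule finite_subset)
  let ?R = "insert (liouville_approx (\<sigma> N)) ((\<lambda>m. liouville_approx (\<sigma> m)) ` {..<N})"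
  show "circles_proj \<sigma> N Q ` circles B \<subseteq> (\<lambda>(b, z). cyl b z) ` (?R \<times> grid_round Q ` sphere 0 1)"
    by (force simp: mem_circles_iff round_base_def)
  show "finite ((\<lambda>(b, z). cyl b z) ` (?R \<times> grid_round Q ` sphere 0 1))"
    using finite_grid_round_image by simp
qed

lemma funpow_rot_circles_proj:
  assumes "strict_mono \<sigma>"
  shows "(rot ^^ 2 ^ fact (\<sigma> N)) (circles_proj \<sigma> N Q x) = circles_proj \<sigma> N Q x"
proof -
  obtain i where "i \<le> \<sigma> N" and i: "round_base \<sigma> N (x 0) = liouville_approx i"
    using round_base_eq_liouville_approx[OF assms] by blast
  from \<open>i \<le> \<sigma> N\<close> have "2 ^ fact (\<sigma> N) * liouville_approx i \<in> \<int>"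
    by (rule liouville_approx_scaled_Ints)
  then have "cis (2 * pi * (2 ^ fact (\<sigma> N) * liouville_approx i)) = 1"
    by (rule cis_multiple_2pi)
  then show ?thesis
    by (simp add: circles_proj_def funpow_rot_cyl i mult_ac)
qed

lemma dist_circles_proj_orbit_le:
  fixes k :: nat
  assumes "strict_mono \<sigma>" "3 \<le> Q" "b \<in> base \<sigma>" "norm z = 1" "k < 2 ^ fact (\<sigma> N)"
  defines "b' \<equiv> round_base \<sigma> N b" and "z' \<equiv> grid_round Q z"
  shows "dist (b', z' * cis (2 * pi * b' * k)) (b, z * cis (2 * pi * b * k))
    \<le> 4 / Q + 18 * (1 / 2) ^ \<sigma> N"
proof -
  have "(1 + 2 * pi * k) * \<bar>b' - b\<bar> \<le> (1 + 2 * pi * 2 ^ fact (\<sigma> N)) * (liouville - liouville_approx (\<sigma> N))"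
    using assms(5) abs_round_base_diff_le[OF assms(1,3)]
    by (intro mult_mono) (auto simp: b'_def)
  also have "\<dots> \<le> 18 * (1 / 2) ^ \<sigma> N"
    by (rule liouville_rotation_tail_le)
  finally show ?thesis
    using dist_rot_orbit_le[OF assms(4), of b' z' k b] grid_round_close(2)[OF assms(2,4)]
    by (simp add: z'_def)
qed

lemma uniformly_continuous_on_finite_family:
  fixes F :: "('a::metric_space \<Rightarrow> 'b::metric_space) set"
  assumes "finite F" "\<And>f. f \<in> F \<Longrightarrow> uniformly_continuous_on K f" "0 < e"
  shows "\<exists>d>0. \<forall>f\<in>F. \<forall>x\<in>K. \<forall>y\<in>K. dist x y < d \<longrightarrow> dist (f x) (f y) < e"
  using assms(1,2)
proof (induction F rule: finite_induct)
  case (insert g F)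
  obtain d1 where "0 < d1" "\<forall>f\<in>F. \<forall>x\<in>K. \<forall>y\<in>K. dist x y < d1 \<longrightarrow> dist (f x) (f y) < e"
    using insert by blast
  moreover obtain d2 where "0 < d2" "\<forall>x\<in>K. \<forall>y\<in>K. dist x y < d2 \<longrightarrow> dist (g x) (g y) < e"
    using insert.prems[of g] assms(3) unfolding uniformly_continuous_on_def by (metis insertI1 dist_commute)
  ultimately show ?case
    by (intro exI[of _ "min d1 d2"]) auto
qed (auto intro: zero_less_one)

lemma uniformly_continuous_on_circles:
  fixes F :: "((nat \<Rightarrow> real) \<Rightarrow> real) set"
  assumes "compact B" "finite F" "\<forall>f\<in>F. continuous_on (circles B) f" "0 < \<epsilon>"
  shows "\<exists>\<delta>>0. \<forall>f\<in>F. \<forall>b z b' z'. b \<in> B \<longrightarrow> norm z = 1 \<longrightarrow> b' \<in> B \<longrightarrow> norm z' = 1 \<longrightarrow>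
    dist (b, z) (b', z') < \<delta> \<longrightarrow> \<bar>f (cyl b z) - f (cyl b' z')\<bar> < \<epsilon>"
proof -
  define c where "c = (\<lambda>(b :: real, z :: complex). cyl b z)"
  have "uniformly_continuous_on (B \<times> sphere 0 1) g" if "g \<in> (\<lambda>f. f \<circ> c) ` F" for g
    using that assms(1,3)
    by (auto simp: c_def circles_def intro!: compact_uniformly_continuous compact_Times
        continuous_on_compose continuous_on_cyl)
  then obtain \<delta> where "0 < \<delta>" "\<forall>g\<in>(\<lambda>f. f \<circ> c) ` F. \<forall>p\<in>B \<times> sphere 0 1. \<forall>q\<in>B \<times> sphere 0 1.
      dist p q < \<delta> \<longrightarrow> dist (g p) (g q) < \<epsilon>"
    using uniformly_continuous_on_finite_family[of "(\<lambda>f. f \<circ> c) ` F"] assms(2,4) by blast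
  then show ?thesis
    by (intro exI[of _ \<delta>]) (auto simp: c_def dist_real_def)
qed

lemma circles_proj_parameters:
  fixes \<sigma> :: "nat \<Rightarrow> nat"
  assumes "strict_mono \<sigma>" "0 < \<delta>"
  shows "\<exists>Q N. 3 \<le> Q \<and> 4 / real Q + 18 * (1 / 2) ^ \<sigma> N < \<delta>"
proof -
  obtain n :: nat where "8 / \<delta> < n"
    using reals_Archimedean2 by blast
  then have "4 / real (n + 3) < \<delta> / 2"
    using assms(2) by (auto simp: field_simps)
  moreover obtain N where "(1 / 2 :: real) ^ N < \<delta> / 36"
    using real_arch_pow_inv[of "\<delta> / 36" "1 / 2 :: real"] assms(2) by auto
  moreover have "(1 / 2 :: real) ^ \<sigma> N \<le> (1 / 2) ^ N"
    by (rule power_decreasing[OF seq_suble[OF assms(1)]]) auto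
  ultimately have "3 \<le> n + 3 \<and> 4 / real (n + 3) + 18 * (1 / 2) ^ \<sigma> N < \<delta>"
    by linarith
  then show ?thesis
    by blast
qed

lemma dense_periodic_measures_circles_base:
  assumes \<sigma>: "strict_mono \<sigma>"
  shows "dense_periodic_measures (circles (base \<sigma>)) rot"
proof (rule dense_periodic_measuresI[OF dynamical_system_circles[OF compact_base[OF \<sigma>]]])
  fix F :: "((nat \<Rightarrow> real) \<Rightarrow> real) set" and \<epsilon> :: real
  assume "finite F" "\<forall>f\<in>F. continuous_on (circles (base \<sigma>)) f" "0 < \<epsilon>"
  then obtain \<delta> where "0 < \<delta>" and \<delta>: "\<And>f b z b' z'. f \<in> F \<Longrightarrow> b \<in> base \<sigma> \<Longrightarrow> norm z = 1 \<Longrightarrow>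
      b' \<in> base \<sigma> \<Longrightarrow> norm z' = 1 \<Longrightarrow> dist (b, z) (b', z') < \<delta> \<Longrightarrow> \<bar>f (cyl b z) - f (cyl b' z')\<bar> < \<epsilon>"
    using uniformly_continuous_on_circles[OF compact_base[OF \<sigma>]] by metis
  obtain Q N :: nat where Q: "3 \<le> Q" and QN: "4 / real Q + 18 * (1 / 2) ^ \<sigma> N < \<delta>"
    using circles_proj_parameters[OF \<sigma> \<open>0 < \<delta>\<close>] by blast
  have close: "\<bar>f ((rot ^^ k) (circles_proj \<sigma> N Q x)) - f ((rot ^^ k) x)\<bar> \<le> \<epsilon>"
    if x_in: "x \<in> circles (base \<sigma>)" and k: "k < 2 ^ fact (\<sigma> N)" and f: "f \<in> F" for x k f
  proof -
    obtain b z where x: "x = cyl b z" "b \<in> base \<sigma>" "norm z = 1"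
      using x_in by (auto simp: mem_circles_iff)
    define b' where "b' = round_base \<sigma> N b"
    define z' where "z' = grid_round Q z"
    have "dist (b', z' * cis (2 * pi * b' * k)) (b, z * cis (2 * pi * b * k)) < \<delta>"
      using dist_circles_proj_orbit_le[OF \<sigma> Q x(2,3) k] QN by (simp add: b'_def z'_def)
    moreover have "b' \<in> base \<sigma>" "norm (z' * cis (2 * pi * b' * k)) = 1"
      using grid_round_close(1)[OF Q x(3)] by (auto simp: b'_def z'_def round_base_in_base norm_mult)
    ultimately have "\<bar>f (cyl b' (z' * cis (2 * pi * b' * k))) - f (cyl b (z * cis (2 * pi * b * k)))\<bar> < \<epsilon>"
      using \<delta>[OF f] x by (simp add: norm_mult)
    then show ?thesis
      by (simp add: x funpow_rot_cyl b'_def z'_def)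
  qed
  show "\<exists>\<pi> L. 0 < L \<and> \<pi> \<in> measurable (restrict_space borel (circles (base \<sigma>)))
        (restrict_space borel (circles (base \<sigma>))) \<and> finite (\<pi> ` circles (base \<sigma>)) \<and>
      (\<forall>x\<in>circles (base \<sigma>). (rot ^^ L) (\<pi> x) = \<pi> x) \<and>
      (\<forall>x\<in>circles (base \<sigma>). \<forall>k<L. \<forall>f\<in>F. \<bar>f ((rot ^^ k) (\<pi> x)) - f ((rot ^^ k) x)\<bar> \<le> \<epsilon>)"
    using circles_proj_measurable[OF Q] finite_circles_proj_image funpow_rot_circles_proj[OF \<sigma>] close
    by (intro exI[of _ "circles_proj \<sigma> N Q"] exI[of _ "2 ^ fact (\<sigma> N)"]) auto
qed

section \<open>Rotation invariance of Lebesgue measure on the circle\<close>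

lemma emeasure_lborel_vimage_plus:
  assumes "S \<in> sets borel"
  shows "emeasure lborel ((\<lambda>t :: real. c + t) -` S) = emeasure lborel S"
proof -
  have "emeasure lborel S = emeasure (distr lborel borel ((+) c)) S"
    by (simp add: lborel_distr_plus)
  also have "\<dots> = emeasure lborel ((+) c -` S \<inter> space lborel)"
    by (rule emeasure_distr) (use assms in auto)
  finally show ?thesis
    by simp
qed

text \<open>For a 1-periodic Borel set \<open>B\<close>, the part of \<open>B - a\<close> in \<open>[0, 1)\<close> is \<open>B \<inter> [a, 1)\<close> together with
  a translate of \<open>B \<inter> [0, a)\<close>.\<close>
lemma emeasure_periodic_vimage_plus:
  assumes B: "B \<in> sets borel" and per: "\<And>t. t + 1 \<in> B \<longleftrightarrow> t \<in> B" and a: "0 \<le> a" "a \<le> 1"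
  shows "emeasure lborel ((\<lambda>t :: real. t + a) -` B \<inter> {0..<1}) = emeasure lborel (B \<inter> {0..<1})"
proof -
  have shift: "(\<lambda>t. t + a) -` B \<inter> {0..<1} = (\<lambda>t. a + t) -` (B \<inter> {a..<1 + a})"
    by (auto simp: add.commute)
  have split: "B \<inter> {a..<1 + a} = (B \<inter> {a..<1}) \<union> (B \<inter> {1..<1 + a})"
    using a by auto
  have wrap: "B \<inter> {1..<1 + a} = (\<lambda>t. - 1 + t) -` (B \<inter> {0..<a})"
    using per[of "_ - 1"] by auto
  have "emeasure lborel ((\<lambda>t. t + a) -` B \<inter> {0..<1}) = emeasure lborel (B \<inter> {a..<1 + a})"
    unfolding shift by (rule emeasure_lborel_vimage_plus) (use B in auto)
  also have "\<dots> = emeasure lborel (B \<inter> {a..<1}) + emeasure lborel (B \<inter> {1..<1 + a})"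
    unfolding split by (rule plus_emeasure[symmetric]) (use B in auto)
  also have "emeasure lborel (B \<inter> {1..<1 + a}) = emeasure lborel (B \<inter> {0..<a})"
    unfolding wrap by (rule emeasure_lborel_vimage_plus) (use B in auto)
  also have "emeasure lborel (B \<inter> {a..<1}) + emeasure lborel (B \<inter> {0..<a})
      = emeasure lborel ((B \<inter> {a..<1}) \<union> (B \<inter> {0..<a}))"
    by (rule plus_emeasure) (use B in auto)
  also have "(B \<inter> {a..<1}) \<union> (B \<inter> {0..<a}) = B \<inter> {0..<1}"
    using a by auto
  finally show ?thesis .
qed

lemma distr_uniform_measure_periodic_shift:
  fixes g :: "real \<Rightarrow> 'b"
  assumes g: "g \<in> measurable borel N" and per: "\<And>t. g (t + 1) = g t" and a: "0 \<le> a" "a \<le> 1"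
  shows "distr (uniform_measure lborel {0..<1}) N (\<lambda>t. g (t + a))
    = distr (uniform_measure lborel {0..<1}) N g"
proof (rule measure_eqI)
  let ?U = "uniform_measure lborel {0..<1 :: real}"
  have g_shift: "(\<lambda>t. g (t + a)) \<in> measurable borel N"
    using g by measurable
  fix A assume "A \<in> sets (distr ?U N (\<lambda>t. g (t + a)))"
  then have A: "A \<in> sets N"
    by simp
  define B where "B = g -` A"
  have B: "B \<in> sets borel"
    using measurable_sets[OF g A] by (simp add: B_def)
  have "(\<lambda>t. t + a) -` B \<in> sets borel"
    using measurable_sets[OF _ B, of "\<lambda>t. t + a" borel] by simp
  then have "emeasure (distr ?U N (\<lambda>t. g (t + a))) A = emeasure lborel ((\<lambda>t. t + a) -` B \<inter> {0..<1})"
    using g_shift A by (simp add: emeasure_distr emeasure_uniform_measure B_def vimage_def Int_commute divide_ennreal_def)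
  also have "\<dots> = emeasure lborel (B \<inter> {0..<1})"
    using per by (intro emeasure_periodic_vimage_plus[OF B _ a]) (simp add: B_def)
  also have "\<dots> = emeasure (distr ?U N g) A"
    using g A B by (simp add: emeasure_distr emeasure_uniform_measure B_def Int_commute divide_ennreal_def)
  finally show "emeasure (distr ?U N (\<lambda>t. g (t + a))) A = emeasure (distr ?U N g) A" .
qed simp

section \<open>The product of the odd and the even system\<close>

lemma funpow_prod_map: "(prod_map f g ^^ k) (x, y) = ((f ^^ k) x, (g ^^ k) y)"
  by (induction k) (simp_all add: prod_map_def)

lemma cis_2pi_eq_1_iff: "cis (2 * pi * x) = 1 \<longleftrightarrow> x \<in> \<int>"
  by (auto simp: cis_eq_1_iff Ints_def)

lemma funpow_rot_cyl_eq_iff: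
  assumes "z \<noteq> 0"
  shows "(rot ^^ K) (cyl b z) = cyl b z \<longleftrightarrow> real K * b \<in> \<int>"
proof -
  have "(rot ^^ K) (cyl b z) = cyl b z \<longleftrightarrow> cis (2 * pi * (real K * b)) = 1"
    using assms by (simp add: funpow_rot_cyl mult_ac)
  then show ?thesis
    by (simp add: cis_2pi_eq_1_iff)
qed

lemma mem_base_Ints_mult:
  assumes "b \<in> base \<sigma>" "0 < n" "real n * b \<in> \<int>"
  shows "\<exists>m. b = liouville_approx (\<sigma> m)"
  using assms of_nat_mult_liouville_not_Ints[of n] by (auto simp: base_def)

definition correlation :: "(nat \<Rightarrow> real) \<times> (nat \<Rightarrow> real) \<Rightarrow> real" where
  "correlation p = fst p 1 * snd p 1 + fst p 2 * snd p 2"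

lemma correlation_cyl [simp]: "correlation (cyl b w, cyl b' w') = Re (w * cnj w')"
  by (simp add: correlation_def)

lemma continuous_on_correlation: "continuous_on S correlation"
  unfolding correlation_def
  by (intro continuous_intros continuous_on_compose2[OF continuous_on_coordinate]) auto

text \<open>On a periodic point of the product the two rotation numbers are distinct rationals
  \<open>liouville_approx (2m + 1)\<close> and \<open>liouville_approx (2m')\<close>, so the phase difference \<open>w\<close> is a nontrivial
  root of unity and the orbit sum of \<open>correlation\<close> is a vanishing geometric sum.\<close>
lemma orbit_sum_correlation_eq_0:
  assumes p: "p \<in> circles (base (\<lambda>m. 2 * m + 1)) \<times> circles (base (\<lambda>m. 2 * m))"
    and K: "0 < K" and per: "(prod_map rot rot ^^ K) p = p"
  shows "(\<Sum>k<K. correlation ((prod_map rot rot ^^ k) p)) = 0"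
proof -
  obtain b1 z1 b2 z2 where p_eq: "p = (cyl b1 z1, cyl b2 z2)" and
    b: "b1 \<in> base (\<lambda>m. 2 * m + 1)" "b2 \<in> base (\<lambda>m. 2 * m)" and z: "norm z1 = 1" "norm z2 = 1"
    using p by (auto simp: mem_circles_iff)
  have "z1 \<noteq> 0" "z2 \<noteq> 0"
    using z by auto
  then have "real K * b1 \<in> \<int>" "real K * b2 \<in> \<int>"
    using per by (simp_all add: p_eq funpow_prod_map funpow_rot_cyl_eq_iff)
  moreover obtain m1 m2 where "b1 = liouville_approx (2 * m1 + 1)" "b2 = liouville_approx (2 * m2)"
    using mem_base_Ints_mult[OF b(1) K] mem_base_Ints_mult[OF b(2) K] calculation by blast
  moreover have "2 * m1 + 1 \<noteq> 2 * m2"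
    by presburger
  ultimately have "b1 - b2 \<notin> \<int>" "real K * (b1 - b2) \<in> \<int>"
    using liouville_approx_diff_not_Ints by (auto simp: right_diff_distrib)
  define w where "w = cis (2 * pi * (b1 - b2))"
  have "w \<noteq> 1"
    using \<open>b1 - b2 \<notin> \<int>\<close> by (simp add: w_def cis_2pi_eq_1_iff)
  have "w ^ K = cis (2 * pi * (real K * (b1 - b2)))"
    unfolding w_def Complex.DeMoivre by (simp add: mult_ac)
  also have "\<dots> = 1"
    using \<open>real K * (b1 - b2) \<in> \<int>\<close> by (rule cis_multiple_2pi)
  finally have "w ^ K = 1" .
  have "correlation ((prod_map rot rot ^^ k) p) = Re (z1 * cnj z2 * w ^ k)" for k
    by (simp add: p_eq funpow_prod_map funpow_rot_cyl w_def Complex.DeMoivre cis_cnj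
        cis_mult algebra_simps)
  then have "(\<Sum>k<K. correlation ((prod_map rot rot ^^ k) p)) = Re (z1 * cnj z2 * (\<Sum>k<K. w ^ k))"
    by (simp add: sum_distrib_left Re_sum)
  also have "(\<Sum>k<K. w ^ k) = 0"
    using \<open>w \<noteq> 1\<close> \<open>w ^ K = 1\<close> by (simp add: sum_gp_strict)
  finally show ?thesis
    by simp
qed

lemma integral_correlation_periodic_measure:
  assumes "periodic_measure (circles (base (\<lambda>m. 2 * m + 1)) \<times> circles (base (\<lambda>m. 2 * m))) (prod_map rot rot) \<nu>"
  shows "(\<integral>p. correlation p \<partial>\<nu>) = 0"
proof -
  have dyn: "dynamical_system (circles (base (\<lambda>m. 2 * m + 1)) \<times> circles (base (\<lambda>m. 2 * m))) (prod_map rot rot)"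
    by (intro dynamical_system_prod_map dynamical_system_circles compact_base strict_monoI) auto
  obtain K where "0 < K" "AE p in \<nu>. (prod_map rot rot ^^ K) p = p"
    using periodic_measure_AE_periodic[OF dyn assms] by blast
  then show ?thesis
    using assms orbit_sum_correlation_eq_0
    by (intro integral_eq_0_if_periodic_orbit_sums_eq_0[OF dyn _ _ _ continuous_on_correlation])
      (auto simp: periodic_measure_def)
qed

definition diagonal_curve :: "real \<Rightarrow> real \<Rightarrow> (nat \<Rightarrow> real) \<times> (nat \<Rightarrow> real)" where
  "diagonal_curve b t = (cyl b (cis (2 * pi * t)), cyl b (cis (2 * pi * t)))"

definition diagonal_measure :: "real set \<Rightarrow> real set \<Rightarrow> real \<Rightarrow> ((nat \<Rightarrow> real) \<times> (nat \<Rightarrow> real)) measure" where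
  "diagonal_measure B1 B2 b =
    distr (uniform_measure lborel {0..<1}) (restrict_space borel (circles B1 \<times> circles B2)) (diagonal_curve b)"

lemma diagonal_curve_measurable:
  assumes "b \<in> B1" "b \<in> B2"
  shows "diagonal_curve b \<in> measurable borel (restrict_space borel (circles B1 \<times> circles B2))"
    and "diagonal_curve b
      \<in> measurable (uniform_measure lborel {0..<1}) (restrict_space borel (circles B1 \<times> circles B2))"
proof -
  have "continuous_on UNIV (\<lambda>t. cyl b (cis (2 * pi * t)))"
    by (intro continuous_on_cyl_compose continuous_intros)
  then show borel: "diagonal_curve b \<in> measurable borel (restrict_space borel (circles B1 \<times> circles B2))"
    using assms unfolding diagonal_curve_def
    by (intro measurable_restrict_space2 borel_measurable_continuous_onI continuous_on_Pair)
      (auto simp: mem_circles_iff)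
  moreover have "measurable (uniform_measure lborel {0..<1}) (restrict_space borel (circles B1 \<times> circles B2))
      = measurable borel (restrict_space borel (circles B1 \<times> circles B2))"
    by (rule measurable_cong_sets) simp_all
  ultimately show "diagonal_curve b
      \<in> measurable (uniform_measure lborel {0..<1}) (restrict_space borel (circles B1 \<times> circles B2))"
    by simp
qed

lemma invariant_prob_diagonal_measure:
  assumes "b \<in> B1" "b \<in> B2" "0 \<le> b" "b \<le> 1"
  shows "invariant_prob (circles B1 \<times> circles B2) (prod_map rot rot) (diagonal_measure B1 B2 b)"
proof -
  let ?M = "restrict_space borel (circles B1 \<times> circles B2)"
  let ?U = "uniform_measure lborel {0..<1 :: real}"
  let ?\<mu> = "diagonal_measure B1 B2 b"
  note \<gamma> = diagonal_curve_measurable[OF assms(1,2)]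
  have "continuous_on UNIV (map_prod rot rot)"
    using continuous_on_map_prod[OF continuous_on_rot continuous_on_rot, of UNIV UNIV] by simp
  then have rot: "prod_map rot rot \<in> measurable ?M ?M"
    unfolding prod_map_eq_map_prod
    by (intro measurable_restrict_space2 measurable_restrict_space1 borel_measurable_continuous_onI)
      (auto simp: space_restrict_space rot_in_circles)
  have shift: "prod_map rot rot (diagonal_curve b t) = diagonal_curve b (t + b)" for t
    by (simp add: diagonal_curve_def prod_map_def cis_mult algebra_simps)
  have per: "diagonal_curve b (t + 1) = diagonal_curve b t" for t
    by (simp add: diagonal_curve_def distrib_left flip: cis_mult)
  have sets_\<mu>: "sets ?\<mu> = sets ?M"
    by (simp add: diagonal_measure_def)
  have "distr ?\<mu> ?\<mu> (prod_map rot rot) = distr ?\<mu> ?M (prod_map rot rot)"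
    by (rule distr_cong) (simp_all add: sets_\<mu>)
  also have "\<dots> = distr ?U ?M (\<lambda>t. diagonal_curve b (t + b))"
    unfolding diagonal_measure_def distr_distr[OF rot \<gamma>(2)] by (simp add: o_def shift)
  also have "\<dots> = ?\<mu>"
    unfolding diagonal_measure_def by (rule distr_uniform_measure_periodic_shift[OF \<gamma>(1) per assms(3,4)])
  finally have "distr ?\<mu> ?\<mu> (prod_map rot rot) = ?\<mu>" .
  moreover have "prob_space ?\<mu>"
    unfolding diagonal_measure_def by (rule prob_space.prob_space_distr[OF prob_space_uniform_measure \<gamma>(2)]) auto
  moreover have "prod_map rot rot \<in> measurable ?\<mu> ?\<mu>"
    using rot by (simp add: measurable_cong_sets[OF sets_\<mu> sets_\<mu>])
  ultimately show ?thesis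
    using sets_\<mu> by (simp add: invariant_prob_def)
qed

lemma integral_correlation_diagonal_measure:
  assumes "b \<in> B1" "b \<in> B2"
  shows "(\<integral>p. correlation p \<partial>diagonal_measure B1 B2 b) = 1"
proof -
  have "(\<integral>p. correlation p \<partial>diagonal_measure B1 B2 b)
      = (\<integral>t. correlation (diagonal_curve b t) \<partial>uniform_measure lborel {0..<1})"
    unfolding diagonal_measure_def
    by (intro integral_distr diagonal_curve_measurable(2)[OF assms] borel_measurable_continuous_on_restrict
        continuous_on_correlation)
  also have "\<dots> = 1"
  proof -
    have "prob_space (uniform_measure lborel {0..<1 :: real})"
      by (rule prob_space_uniform_measure) auto
    then show ?thesis
      using prob_space.prob_space by (fastforce simp: diagonal_curve_def cis_cnj cis_mult)
  qed
  finally show ?thesis .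
qed

lemma not_dense_periodic_measures_product:
  "\<not> dense_periodic_measures (circles (base (\<lambda>m. 2 * m + 1)) \<times> circles (base (\<lambda>m. 2 * m)))
    (prod_map rot rot)"
proof (rule not_dense_periodic_measuresI[OF _ continuous_on_correlation])
  have "liouville \<in> base \<sigma>" for \<sigma>
    by (simp add: base_def)
  moreover have "0 \<le> liouville" "liouville \<le> 1"
    using liouville_approx_nonneg[of 0] liouville_approx_less[of 0] liouville_le_1 by auto
  ultimately show "invariant_prob (circles (base (\<lambda>m. 2 * m + 1)) \<times> circles (base (\<lambda>m. 2 * m)))
      (prod_map rot rot) (diagonal_measure (base (\<lambda>m. 2 * m + 1)) (base (\<lambda>m. 2 * m)) liouville)"
    and "(\<integral>p. correlation p \<partial>diagonal_measure (base (\<lambda>m. 2 * m + 1)) (base (\<lambda>m. 2 * m)) liouville) \<noteq> 0"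
    by (simp_all add: invariant_prob_diagonal_measure integral_correlation_diagonal_measure)
qed (rule integral_correlation_periodic_measure)

theorem theorem1p3:
  shows "\<exists>(X1 :: (nat \<Rightarrow> real) set) T1 (X2 :: (nat \<Rightarrow> real) set) T2.
     dynamical_system X1 T1 \<and> dynamical_system X2 T2 \<and>
     dense_periodic_measures X1 T1 \<and> dense_periodic_measures X2 T2 \<and>
     \<not> dense_periodic_measures (X1 \<times> X2) (prod_map T1 T2)"
proof -
  have odd: "strict_mono (\<lambda>m :: nat. 2 * m + 1)" and even: "strict_mono (\<lambda>m :: nat. 2 * m)"
    by (auto intro: strict_monoI)
  show ?thesis
    using dynamical_system_circles[OF compact_base[OF odd]] dynamical_system_circles[OF compact_base[OF even]]
      dense_periodic_measures_circles_base[OF odd] dense_periodic_measures_circles_base[OF even]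
      not_dense_periodic_measures_product
    by blast
qed

end
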